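(* Let $V$ be a finite node set and let $x=(x_{u,v})$ be a real vector indexed by ordered pairs $(u,v)$ of distinct nodes of $V$ satisfying $0\le x_{u,v}\le 1$ for all such pairs and $\sum_{u\in V\setminus\{v\}}x_{u,v}\le 1$ for every $v\in V$. Let $\mathcal{W}$ be a finite nonempty set of directed walks that all end in the same node $t$, such that for any two distinct walks $W\neq W'\in\mathcal{W}$ there is a node $v$ with $|\delta^-_W(v)\cup\delta^-_{W'}(v)|\ge 2$. Then $$\sum_{W\in\mathcal{W}}x(W)\le\Big(\sum_{W\in\mathcal{W}}\ell_W\Big)-|\mathcal{W}|+1.$$
   Context: A directed walk is a sequence $W=v_0,a_1,v_1,\dots,a_k,v_k$ with arcs $a_i=(v_{i-1},v_i)$, $v_{i-1}\neq v_i$; it may repeat nodes and arcs. Its length $\ell_W=k$ is the number of arcs counted with multiplicity, and $x(W)=\sum_{i=1}^k x_{a_i}$ (with multiplicity). For a node $v$, $\delta^-_W(v)$ denotes the set of arcs of $W$ entering $v$ (i.e. the set of $a_i$ with head $v_i=v$). *)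

theory Defs
  imports Complex_Main
begin

text \<open>A directed walk v0, a1, v1, ..., ak, vk is represented by its node list [v0, ..., vk]
  (nonempty); its arcs are the consecutive pairs (v_{i-1}, v_i), listed with multiplicity.\<close>

definition walk_arcs :: "'a list \<Rightarrow> ('a \<times> 'a) list" where
  "walk_arcs W = zip W (tl W)"

definition is_walk :: "'a set \<Rightarrow> 'a list \<Rightarrow> bool" where
  "is_walk V W \<longleftrightarrow> W \<noteq> [] \<and> set W \<subseteq> V \<and> (\<forall>(u, v) \<in> set (walk_arcs W). u \<noteq> v)"

definition walk_len :: "'a list \<Rightarrow> nat" where
  "walk_len W = length (walk_arcs W)"

definition walk_weight :: "('a \<Rightarrow> 'a \<Rightarrow> real) \<Rightarrow> 'a list \<Rightarrow> real" where
  "walk_weight x W = sum_list (map (\<lambda>(u, v). x u v) (walk_arcs W))"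

definition in_arcs :: "'a list \<Rightarrow> 'a \<Rightarrow> ('a \<times> 'a) set" where
  "in_arcs W v = {a \<in> set (walk_arcs W). snd a = v}"

end

theory Submission
  imports Defs
begin

(* For a walk W, the slack of W, i.e. the sum of 1 - x_a over the distinct arcs a of W,
  is at most l_W - x(W); so it suffices that the total slack of the family is at least the
  number of walks minus 1.
  This is shown abstractly, by induction over the nodes. At a node v, let c be the arc into v that
  lies on the most walks. As the arcs into v carry total weight at most 1, the slack at v summed
  over all walks is at least the number of walks entering v through an arc other than c. The
  other walks enter v at most through c, so they are pairwise separated at the remaining nodes
  and the induction hypothesis applies to them. *)

lemma sum_set_le_sum_list:
  fixes f :: "'b \<Rightarrow> real"
  assumes "\<And>a. a \<in> set xs \<Longrightarrow> 0 \<le> f a"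
  shows "sum f (set xs) \<le> sum_list (map f xs)"
  using assms
proof (induction xs)
  case (Cons a xs)
  then have "sum f (set (a # xs)) \<le> f a + sum f (set xs)"
    by (simp add: sum.insert_if)
  with Cons show ?case by simp
qed simp

lemma exists_card_not_subset_singleton_le_slack:
  fixes I :: "'w \<Rightarrow> 'b set" and X :: "'b \<Rightarrow> real"
  assumes S: "finite S" and I: "\<And>W. W \<in> S \<Longrightarrow> finite (I W)"
    and X_nonneg: "\<And>a. a \<in> (\<Union>W\<in>S. I W) \<Longrightarrow> 0 \<le> X a"
    and X_sum: "sum X (\<Union>W\<in>S. I W) \<le> 1"
  shows "\<exists>c. real (card {W\<in>S. \<not> I W \<subseteq> {c}}) \<le> (\<Sum>W\<in>S. \<Sum>a\<in>I W. 1 - X a)"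
proof -
  define A where "A = (\<Union>W\<in>S. I W)"
  define n where "n a = card {W\<in>S. a \<in> I W}" for a
  have A: "finite A"
    using S I by (simp add: A_def)
  obtain c where c: "\<And>a. a \<in> A \<Longrightarrow> n a \<le> n c"
  proof (cases "A = {}")
    case False
    then show ?thesis
      using that A by (metis Max_ge finite_imageI image_eqI obtains_MAX)
  qed (use that in blast)
  have weight: "(\<Sum>W\<in>S. \<Sum>a\<in>I W. X a) \<le> n c"
  proof -
    have "(\<Sum>W\<in>S. \<Sum>a\<in>I W. X a) = (\<Sum>W\<in>S. \<Sum>a\<in>{a\<in>A. a \<in> I W}. X a)"
      by (intro sum.cong refl) (auto simp: A_def)
    also have "\<dots> = (\<Sum>a\<in>A. \<Sum>W\<in>{W\<in>S. a \<in> I W}. X a)"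
      by (rule sum.swap_restrict[OF S A])
    also have "\<dots> = (\<Sum>a\<in>A. n a * X a)"
      by (simp add: n_def)
    also have "\<dots> \<le> (\<Sum>a\<in>A. n c * X a)"
      by (intro sum_mono mult_right_mono) (use c X_nonneg in \<open>auto simp: A_def\<close>)
    also have "\<dots> = n c * sum X A"
      by (simp add: sum_distrib_left)
    also have "\<dots> \<le> n c"
      using X_sum by (intro mult_left_le) (auto simp: A_def)
    finally show ?thesis .
  qed
  have count: "card {W\<in>S. \<not> I W \<subseteq> {c}} + n c \<le> (\<Sum>W\<in>S. card (I W))"
  proof -
    have "of_bool (\<not> I W \<subseteq> {c}) + of_bool (c \<in> I W) \<le> card (I W)" if "W \<in> S" for W
    proof -
      have "card (I W) = of_bool (c \<in> I W) + card (I W - {c})"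
        using I[OF that] card_Suc_Diff1[of "I W" c] by (cases "c \<in> I W") auto
      moreover have "card (I W - {c}) \<noteq> 0" if "\<not> I W \<subseteq> {c}"
        using I[OF \<open>W \<in> S\<close>] that by auto
      ultimately show ?thesis
        by (cases "I W \<subseteq> {c}") auto
    qed
    then have "(\<Sum>W\<in>S. of_bool (\<not> I W \<subseteq> {c}) + of_bool (c \<in> I W)) \<le> (\<Sum>W\<in>S. card (I W))"
      by (rule sum_mono)
    then show ?thesis
      using S by (simp add: sum.distrib n_def Collect_conj_eq Int_commute)
  qed
  have "(\<Sum>W\<in>S. \<Sum>a\<in>I W. 1 - X a) = (\<Sum>W\<in>S. real (card (I W))) - (\<Sum>W\<in>S. \<Sum>a\<in>I W. X a)"
    by (simp add: sum_subtractf)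
  also have "\<dots> \<ge> real (card {W\<in>S. \<not> I W \<subseteq> {c}})"
    using weight count[THEN of_nat_mono[where 'a = real]] by simp
  finally show ?thesis by blast
qed

lemma card_minus_one_le_slack:
  fixes I :: "'w \<Rightarrow> 'v \<Rightarrow> 'b set" and X :: "'b \<Rightarrow> real"
  assumes "finite U" and "finite S"
    and "\<And>W v. W \<in> S \<Longrightarrow> finite (I W v)"
    and "\<And>W v a. W \<in> S \<Longrightarrow> a \<in> I W v \<Longrightarrow> 0 \<le> X a \<and> X a \<le> 1"
    and "\<And>v. v \<in> U \<Longrightarrow> sum X (\<Union>W\<in>S. I W v) \<le> 1"
    and "\<And>W W'. W \<in> S \<Longrightarrow> W' \<in> S \<Longrightarrow> W \<noteq> W' \<Longrightarrow> \<exists>v\<in>U. 2 \<le> card (I W v \<union> I W' v)"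
  shows "real (card S) - 1 \<le> (\<Sum>W\<in>S. \<Sum>v\<in>U. \<Sum>a\<in>I W v. 1 - X a)"
  using assms
proof (induction U arbitrary: S rule: finite_induct)
  case empty
  have "card S \<le> Suc 0"
    unfolding card_le_Suc0_iff_eq[OF empty.prems(1)] using empty.prems(5) by blast
  then show ?case by simp
next
  case (insert v U S)
  have slack_nonneg: "0 \<le> (\<Sum>a\<in>I W u. 1 - X a)" if "W \<in> S" for W u
    using insert.prems(3)[OF that] by (intro sum_nonneg) auto
  obtain c where c: "real (card {W\<in>S. \<not> I W v \<subseteq> {c}}) \<le> (\<Sum>W\<in>S. \<Sum>a\<in>I W v. 1 - X a)"
    using exists_card_not_subset_singleton_le_slack[of S "\<lambda>W. I W v" X] insert.prems by blast
  define P where "P = {W\<in>S. I W v \<subseteq> {c}}"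
  have P: "P \<subseteq> S" "finite P"
    using insert.prems(1) by (auto simp: P_def)
  have "real (card P) - 1 \<le> (\<Sum>W\<in>P. \<Sum>u\<in>U. \<Sum>a\<in>I W u. 1 - X a)"
  proof (rule insert.IH[OF \<open>finite P\<close>])
    show "sum X (\<Union>W\<in>P. I W u) \<le> 1" if "u \<in> U" for u
    proof -
      have "sum X (\<Union>W\<in>P. I W u) \<le> sum X (\<Union>W\<in>S. I W u)"
        using P insert.prems(1-3) by (intro sum_mono2) auto
      also have "\<dots> \<le> 1"
        using insert.prems(4) that by blast
      finally show ?thesis .
    qed
    show "\<exists>u\<in>U. 2 \<le> card (I W u \<union> I W' u)" if WW': "W \<in> P" "W' \<in> P" "W \<noteq> W'" for W W'
    proof -
      have "W \<in> S" and "W' \<in> S"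
        using WW'(1,2) P(1) by auto
      then obtain u where u: "u \<in> insert v U" "2 \<le> card (I W u \<union> I W' u)"
        using insert.prems(5) WW'(3) by meson
      have "card (I W v \<union> I W' v) \<le> 1"
        using WW' card_mono[of "{c}" "I W v \<union> I W' v"] by (auto simp: P_def)
      then have "u \<noteq> v"
        using u(2) by (intro notI) simp
      with u show ?thesis by blast
    qed
    show "finite (I W u)" if "W \<in> P" for W u
      using that P(1) insert.prems(2) by blast
    show "0 \<le> X a \<and> X a \<le> 1" if "W \<in> P" and "a \<in> I W u" for W u a
      using that P(1) insert.prems(3) by blast
  qed
  also have "\<dots> \<le> (\<Sum>W\<in>S. \<Sum>u\<in>U. \<Sum>a\<in>I W u. 1 - X a)"
    using P insert.prems(1) slack_nonneg by (intro sum_mono2) (auto intro: sum_nonneg)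
  finally have "real (card P) - 1 \<le> (\<Sum>W\<in>S. \<Sum>u\<in>U. \<Sum>a\<in>I W u. 1 - X a)" .
  moreover have "card S = card P + card {W\<in>S. \<not> I W v \<subseteq> {c}}"
    using insert.prems(1)
    by (subst card_Un_disjoint[symmetric]) (auto simp: P_def intro: arg_cong[where f = card])
  moreover have "(\<Sum>W\<in>S. \<Sum>u\<in>insert v U. \<Sum>a\<in>I W u. 1 - X a)
      = (\<Sum>W\<in>S. \<Sum>a\<in>I W v. 1 - X a) + (\<Sum>W\<in>S. \<Sum>u\<in>U. \<Sum>a\<in>I W u. 1 - X a)"
    using insert.hyps by (simp add: sum.distrib)
  ultimately show ?case
    using c by simp
qed

lemma is_walk_arcD:
  assumes "is_walk V W" and "(u, v) \<in> set (walk_arcs W)"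
  shows "u \<in> V" and "v \<in> V" and "u \<noteq> v"
  using assms unfolding is_walk_def walk_arcs_def
  by (auto dest: set_zip_leftD set_zip_rightD list.set_sel(2))

lemma in_arcs_subset:
  assumes "is_walk V W"
  shows "in_arcs W v \<subseteq> (\<lambda>u. (u, v)) ` (V - {v})"
  using is_walk_arcD[OF assms] by (fastforce simp: in_arcs_def)

lemma in_arcs_eq_empty:
  assumes "is_walk V W" and "v \<notin> V"
  shows "in_arcs W v = {}"
  using is_walk_arcD(2)[OF assms(1)] assms(2) by (fastforce simp: in_arcs_def)

lemma sum_weight_in_arcs_le:
  fixes x :: "'a \<Rightarrow> 'a \<Rightarrow> real"
  assumes "finite V" and "\<And>W. W \<in> \<W> \<Longrightarrow> is_walk V W"
    and "\<And>u. u \<in> V \<Longrightarrow> u \<noteq> v \<Longrightarrow> 0 \<le> x u v"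
  shows "sum (case_prod x) (\<Union>W\<in>\<W>. in_arcs W v) \<le> (\<Sum>u\<in>V - {v}. x u v)"
proof -
  have "sum (case_prod x) (\<Union>W\<in>\<W>. in_arcs W v) \<le> sum (case_prod x) ((\<lambda>u. (u, v)) ` (V - {v}))"
  proof (rule sum_mono2)
    show "(\<Union>W\<in>\<W>. in_arcs W v) \<subseteq> (\<lambda>u. (u, v)) ` (V - {v})"
      by (intro UN_least in_arcs_subset assms(2))
    show "finite ((\<lambda>u. (u, v)) ` (V - {v}))"
      using assms(1) by simp
    show "0 \<le> case_prod x b" if "b \<in> (\<lambda>u. (u, v)) ` (V - {v}) - (\<Union>W\<in>\<W>. in_arcs W v)" for b
      using that assms(3) by auto
  qed
  also have "\<dots> = (\<Sum>u\<in>V - {v}. x u v)"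
    by (subst sum.reindex) (auto intro: inj_onI)
  finally show ?thesis .
qed

lemma slack_in_arcs_le_len_minus_weight:
  assumes "finite V" and "is_walk V W"
    and "\<And>u v. (u, v) \<in> set (walk_arcs W) \<Longrightarrow> x u v \<le> 1"
  shows "(\<Sum>v\<in>V. \<Sum>a\<in>in_arcs W v. 1 - case_prod x a) \<le> real (walk_len W) - walk_weight x W"
proof -
  have "snd ` set (walk_arcs W) \<subseteq> V"
    using is_walk_arcD(2)[OF assms(2)] by auto
  then have "(\<Sum>v\<in>V. \<Sum>a\<in>in_arcs W v. 1 - case_prod x a) = (\<Sum>a\<in>set (walk_arcs W). 1 - case_prod x a)"
    unfolding in_arcs_def by (rule sum.group[OF finite_set assms(1)])
  also have "\<dots> \<le> (\<Sum>a\<leftarrow>walk_arcs W. 1 - case_prod x a)"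
    using assms(3) by (intro sum_set_le_sum_list) auto
  also have "\<dots> = real (walk_len W) - walk_weight x W"
    by (simp add: walk_len_def walk_weight_def sum_list_subtractf sum_list_triv)
  finally show ?thesis .
qed

theorem lemma1:
  fixes V :: "'a set" and x :: "'a \<Rightarrow> 'a \<Rightarrow> real" and \<W> :: "'a list set" and t :: 'a
  assumes "finite V"
    and "\<And>u v. u \<in> V \<Longrightarrow> v \<in> V \<Longrightarrow> u \<noteq> v \<Longrightarrow> 0 \<le> x u v \<and> x u v \<le> 1"
    and "\<And>v. v \<in> V \<Longrightarrow> (\<Sum>u\<in>V - {v}. x u v) \<le> 1"
    and "finite \<W>" and "\<W> \<noteq> {}"
    and "\<And>W. W \<in> \<W> \<Longrightarrow> is_walk V W \<and> last W = t"
    and "\<And>W W'. W \<in> \<W> \<Longrightarrow> W' \<in> \<W> \<Longrightarrow> W \<noteq> W' \<Longrightarrow>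
           \<exists>v. card (in_arcs W v \<union> in_arcs W' v) \<ge> 2"
  shows "(\<Sum>W\<in>\<W>. walk_weight x W) \<le> real (\<Sum>W\<in>\<W>. walk_len W) - real (card \<W>) + 1"
proof -
  have walk: "is_walk V W" if "W \<in> \<W>" for W
    using assms(6)[OF that] by blast
  have x_arc: "0 \<le> x u v \<and> x u v \<le> 1" if "W \<in> \<W>" and "(u, v) \<in> set (walk_arcs W)" for W u v
    using assms(2) is_walk_arcD[OF walk that(2)] that(1) by blast
  have "real (card \<W>) - 1 \<le> (\<Sum>W\<in>\<W>. \<Sum>v\<in>V. \<Sum>a\<in>in_arcs W v. 1 - case_prod x a)"
  proof (rule card_minus_one_le_slack[OF assms(1,4)])
    show "finite (in_arcs W v)" for W :: "'a list" and v
      by (simp add: in_arcs_def)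
    show "0 \<le> case_prod x a \<and> case_prod x a \<le> 1" if "W \<in> \<W>" and "a \<in> in_arcs W v" for W v a
      using that x_arc by (cases a) (auto simp: in_arcs_def)
    show "sum (case_prod x) (\<Union>W\<in>\<W>. in_arcs W v) \<le> 1" if "v \<in> V" for v
      using sum_weight_in_arcs_le[OF assms(1) walk] assms(2,3) that by (meson order.trans)
    show "\<exists>v\<in>V. 2 \<le> card (in_arcs W v \<union> in_arcs W' v)"
      if WW': "W \<in> \<W>" "W' \<in> \<W>" "W \<noteq> W'" for W W'
      using assms(7)[OF WW'] in_arcs_eq_empty[OF walk[OF WW'(1)]] in_arcs_eq_empty[OF walk[OF WW'(2)]]
      by (metis Un_empty card.empty not_numeral_le_zero)
  qed
  also have "\<dots> \<le> (\<Sum>W\<in>\<W>. real (walk_len W) - walk_weight x W)"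
    using slack_in_arcs_le_len_minus_weight[OF assms(1) walk] x_arc by (intro sum_mono) blast
  finally show ?thesis
    by (simp add: sum_subtractf)
qed

end
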